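(* Let $p_1=(\alpha,r,\delta)$ be a condition, $D\subseteq\ell^2$ a dense open set, and $N\in\omega$. Then there exists a condition $p_2=(\beta,s,\eta)$ such that $p_2<p_1$, $U_{s,\eta}\subseteq D$, and $|\beta|>N$.
   Context: $\omega=\{0,1,2,\dots\}$; $\ell^2$ is the Hilbert space of square-summable real sequences indexed by $\omega$. For nonempty $q\in\mathbb Q^{<\omega}$ and rational $\varepsilon>0$, $U_{q,\varepsilon}=\{x\in\ell^2:\lVert (x\upharpoonright|q|)-q\rVert_\infty<\varepsilon|q|^{-1/2}\text{ and }\lVert x\upharpoonright[|q|,\infty)\rVert_2<\varepsilon\}$; for $q$ empty, $U_{q,\varepsilon}=\{x:\lVert x\rVert_2<\varepsilon\}$. For $w\in\{1,2\}^\omega$, $B_w(x)(i)=w(i)x(i+1)$. For $\alpha\in\{1,2\}^{<\omega}$, $\alpha^+\in\{1,2\}^\omega$ is $\alpha$ followed by all $2$'s. A condition is a triple $(\alpha,r,\delta)\in\{1,2\}^{<\omega}\times\mathbb Q^{<\omega}\times(\mathbb Q\cap(0,1))$ with $|\alpha|\ge|r|$ and $\delta<2^{-|\alpha|}$. For conditions $p_1=(\alpha_1,r_1,\delta_1)$ and $p_2=(\alpha_2,r_2,\delta_2)$, $p_2<p_1$ means: $\alpha_1$ is an initial segment of $\alpha_2$; the closure $\overline{U_{r_2,\delta_2}}\subseteq U_{r_1,\delta_1}$; and for all $k\in[|\alpha_1|,|\alpha_2|)$, $B^k_{\alpha_2^+}[U_{r_2,\delta_2}]\subseteq\{y\in\ell^2:\lVert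 y\rVert_2<1\}$. *)

theory Defs
  imports "HOL-Analysis.Analysis"
begin

definition l2 :: "(nat \<Rightarrow> real) set" where
  "l2 = {x. summable (\<lambda>i. (x i)\<^sup>2)}"

definition l2norm :: "(nat \<Rightarrow> real) \<Rightarrow> real" where
  "l2norm x = sqrt (\<Sum>i. (x i)\<^sup>2)"

definition l2dist :: "(nat \<Rightarrow> real) \<Rightarrow> (nat \<Rightarrow> real) \<Rightarrow> real" where
  "l2dist x y = l2norm (\<lambda>i. x i - y i)"

definition l2_open :: "(nat \<Rightarrow> real) set \<Rightarrow> bool" where
  "l2_open S \<longleftrightarrow> S \<subseteq> l2 \<and>
     (\<forall>x\<in>S. \<exists>e>0. \<forall>y\<in>l2. l2dist x y < e \<longrightarrow> y \<in> S)"

definition l2_dense :: "(nat \<Rightarrow> real) set \<Rightarrow> bool" where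
  "l2_dense S \<longleftrightarrow> (\<forall>x\<in>l2. \<forall>e>0. \<exists>y\<in>S. l2dist x y < e)"

definition l2_closure :: "(nat \<Rightarrow> real) set \<Rightarrow> (nat \<Rightarrow> real) set" where
  "l2_closure S = {x\<in>l2. \<forall>e>0. \<exists>y\<in>S. l2dist x y < e}"

definition U :: "rat list \<Rightarrow> rat \<Rightarrow> (nat \<Rightarrow> real) set" where
  "U q \<epsilon> =
    (if q = [] then {x\<in>l2. l2norm x < of_rat \<epsilon>}
     else {x\<in>l2. (\<forall>i<length q. \<bar>x i - of_rat (q ! i)\<bar> < of_rat \<epsilon> / sqrt (real (length q)))
                 \<and> l2norm (\<lambda>i. x (i + length q)) < of_rat \<epsilon>})"

definition Bw :: "(nat \<Rightarrow> nat) \<Rightarrow> (nat \<Rightarrow> real) \<Rightarrow> (nat \<Rightarrow> real)" where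
  "Bw w x = (\<lambda>i. real (w i) * x (Suc i))"

definition plus_seq :: "nat list \<Rightarrow> (nat \<Rightarrow> nat)" where
  "plus_seq \<alpha> = (\<lambda>i. if i < length \<alpha> then \<alpha> ! i else 2)"

definition is_condition :: "nat list \<Rightarrow> rat list \<Rightarrow> rat \<Rightarrow> bool" where
  "is_condition \<alpha> r \<delta> \<longleftrightarrow> set \<alpha> \<subseteq> {1, 2} \<and> 0 < \<delta> \<and> \<delta> < 1 \<and>
     length \<alpha> \<ge> length r \<and> \<delta> < 1 / 2 ^ length \<alpha>"

definition cond_less :: "nat list \<Rightarrow> rat list \<Rightarrow> rat \<Rightarrow> nat list \<Rightarrow> rat list \<Rightarrow> rat \<Rightarrow> bool" where
  "cond_less \<alpha>2 r2 \<delta>2 \<alpha>1 r1 \<delta>1 \<longleftrightarrow>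
     (\<exists>t. \<alpha>2 = \<alpha>1 @ t) \<and>
     l2_closure (U r2 \<delta>2) \<subseteq> U r1 \<delta>1 \<and>
     (\<forall>k. length \<alpha>1 \<le> k \<and> k < length \<alpha>2 \<longrightarrow>
        (\<forall>x\<in>U r2 \<delta>2. l2norm ((Bw (plus_seq \<alpha>2) ^^ k) x) < 1))"

end

theory Submission
  imports Defs
begin

text \<open>
  Pick y \<in> D so close to the centre of U r \<delta> that a ball around y lies in D \<inter> U r \<delta>; in
  particular y is small on the coordinates \<ge> |\<alpha>|, where the centre vanishes. Beyond some
  n > N the tail of y is small. Extend \<alpha> by ones to length n and approximate y on [0, n) by a
  rational list s, with a rational radius \<eta> < 2^-n. Then U s \<eta> lies in a small ball around y,
  so its closure stays in U r \<delta>. For |\<alpha>| \<le> k < n the weights of B^k acting on the first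
  n - k coordinates contain at most |\<alpha>| twos, and there x \<in> U s \<eta> is close to y, hence
  small; on the remaining coordinates the factor 2^k < 2^n is absorbed by \<eta>.
\<close>

lemma L2_set_abs: "L2_set (\<lambda>i. \<bar>f i\<bar>) A = L2_set f A"
  by (simp add: L2_set_def)

lemma L2_set_mono_abs:
  assumes "\<And>i. i \<in> A \<Longrightarrow> \<bar>f i\<bar> \<le> \<bar>g i\<bar>"
  shows "L2_set f A \<le> L2_set g A"
  using L2_set_mono[of A "\<lambda>i. \<bar>f i\<bar>" "\<lambda>i. \<bar>g i\<bar>"] assms by (simp add: L2_set_abs)

lemma L2_set_subset_mono: "finite B \<Longrightarrow> A \<subseteq> B \<Longrightarrow> L2_set f A \<le> L2_set f B"
  unfolding L2_set_def by (intro real_sqrt_le_mono sum_mono2) auto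

lemma L2_set_shift:
  fixes f :: "nat \<Rightarrow> real"
  shows "L2_set (\<lambda>i. f (i + k)) {..<n} = L2_set f {k..<n + k}"
  unfolding L2_set_def using sum.shift_bounds_nat_ivl[of "\<lambda>i. (f i)\<^sup>2" 0 k n]
  by (simp add: atLeast0LessThan)

lemma L2_set_le_l2norm: "x \<in> l2 \<Longrightarrow> finite A \<Longrightarrow> L2_set x A \<le> l2norm x"
  unfolding L2_set_def l2norm_def l2_def by (auto intro!: real_sqrt_le_mono sum_le_suminf)

lemma l2norm_nonneg: "x \<in> l2 \<Longrightarrow> 0 \<le> l2norm x"
  using L2_set_le_l2norm[of x "{}"] by simp

lemma abs_le_l2norm: "x \<in> l2 \<Longrightarrow> \<bar>x i\<bar> \<le> l2norm x"
  using L2_set_le_l2norm[of x "{i}"] by simp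

lemma l2_if_L2_set_bounded:
  assumes bound: "\<And>n. L2_set x {..<n} \<le> B"
  shows "x \<in> l2" and "l2norm x \<le> B"
proof -
  have "0 \<le> B" using bound[of 0] by simp
  have partial: "(\<Sum>i<n. (x i)\<^sup>2) \<le> B\<^sup>2" for n
  proof -
    have "(L2_set x {..<n})\<^sup>2 \<le> B\<^sup>2" using bound[of n] by (intro power_mono) auto
    then show ?thesis by (simp add: L2_set_def sum_nonneg)
  qed
  have "summable (\<lambda>i. (x i)\<^sup>2)"
    by (rule summableI_nonneg_bounded[OF _ partial]) simp
  then show "x \<in> l2" by (simp add: l2_def)
  have "(\<Sum>i. (x i)\<^sup>2) \<le> B\<^sup>2"
    by (rule suminf_le_const[OF \<open>summable _\<close> partial])
  then show "l2norm x \<le> B"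
    unfolding l2norm_def using \<open>0 \<le> B\<close> real_sqrt_le_mono by fastforce
qed

lemma l2_dominated:
  assumes "x \<in> l2" "y \<in> l2" "\<And>i. \<bar>c i\<bar> \<le> \<bar>x i\<bar> + \<bar>y i\<bar>"
  shows "c \<in> l2" and "l2norm c \<le> l2norm x + l2norm y"
proof -
  have "L2_set c {..<n} \<le> l2norm x + l2norm y" for n
  proof -
    have "L2_set c {..<n} \<le> L2_set (\<lambda>i. \<bar>x i\<bar> + \<bar>y i\<bar>) {..<n}"
      using assms(3) by (intro L2_set_mono_abs) (simp add: abs_of_nonneg)
    also have "\<dots> \<le> L2_set x {..<n} + L2_set y {..<n}"
      using L2_set_triangle_ineq[of "\<lambda>i. \<bar>x i\<bar>" "\<lambda>i. \<bar>y i\<bar>" "{..<n}"]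
      by (simp add: L2_set_abs)
    also have "\<dots> \<le> l2norm x + l2norm y"
      using assms(1,2) by (intro add_mono L2_set_le_l2norm) auto
    finally show ?thesis .
  qed
  then show "c \<in> l2" and "l2norm c \<le> l2norm x + l2norm y"
    by (rule l2_if_L2_set_bounded)+
qed

lemma l2_diff: "x \<in> l2 \<Longrightarrow> y \<in> l2 \<Longrightarrow> (\<lambda>i. x i - y i) \<in> l2"
  by (rule l2_dominated[of x y]) auto

lemma l2dist_commute: "l2dist x y = l2dist y x"
  by (simp add: l2dist_def l2norm_def power2_commute)

lemma l2dist_triangle:
  assumes "x \<in> l2" "y \<in> l2" "z \<in> l2"
  shows "l2dist x z \<le> l2dist x y + l2dist y z"
  unfolding l2dist_def
  using l2_dominated(2)[OF l2_diff[of x y] l2_diff[of y z], of "\<lambda>i. x i - z i"] assms by simp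

lemma l2_shift_scaled:
  assumes "x \<in> l2" "0 \<le> M" "\<And>i. \<bar>c i\<bar> \<le> M * \<bar>x (i + k)\<bar>"
  shows "c \<in> l2" and "l2norm c \<le> M * l2norm x"
proof -
  have "L2_set c {..<n} \<le> M * l2norm x" for n
  proof -
    have "L2_set c {..<n} \<le> L2_set (\<lambda>i. M * x (i + k)) {..<n}"
      using assms(2,3) by (intro L2_set_mono_abs) (simp add: abs_mult)
    also have "\<dots> = M * L2_set x {k..<n + k}"
      using L2_set_right_distrib[OF assms(2), of "\<lambda>i. x (i + k)" "{..<n}"]
      by (simp add: L2_set_shift)
    also have "\<dots> \<le> M * l2norm x"
      using assms(1,2) by (intro mult_left_mono L2_set_le_l2norm) auto
    finally show ?thesis .
  qed
  then show "c \<in> l2" and "l2norm c \<le> M * l2norm x"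
    by (rule l2_if_L2_set_bounded)+
qed

lemma l2_shift: "x \<in> l2 \<Longrightarrow> (\<lambda>i. x (i + k)) \<in> l2"
  using l2_shift_scaled(1)[of x 1 "\<lambda>i. x (i + k)" k] by auto

lemma l2norm_le_head_tail:
  assumes "x \<in> l2"
  shows "l2norm x \<le> L2_set x {..<n} + l2norm (\<lambda>i. x (i + n))"
proof -
  have sx: "summable (\<lambda>i. (x i)\<^sup>2)" using assms by (simp add: l2_def)
  have tail_nonneg: "0 \<le> (\<Sum>i. (x (i + n))\<^sup>2)"
    using summable_ignore_initial_segment[OF sx, of n] by (intro suminf_nonneg) simp_all
  have "l2norm x = sqrt ((\<Sum>i<n. (x i)\<^sup>2) + (\<Sum>i. (x (i + n))\<^sup>2))"
    unfolding l2norm_def using suminf_split_initial_segment[OF sx, of n] by simp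
  also have "\<dots> \<le> sqrt (\<Sum>i<n. (x i)\<^sup>2) + sqrt (\<Sum>i. (x (i + n))\<^sup>2)"
    using tail_nonneg by (intro sqrt_add_le_add_sqrt sum_nonneg) simp_all
  also have "\<dots> = L2_set x {..<n} + l2norm (\<lambda>i. x (i + n))"
    by (simp add: L2_set_def l2norm_def)
  finally show ?thesis .
qed

lemma l2norm_tail_small:
  assumes "x \<in> l2" "0 < e"
  shows "\<exists>n0. \<forall>n\<ge>n0. l2norm (\<lambda>i. x (i + n)) < e"
proof -
  have "summable (\<lambda>i. (x i)\<^sup>2)" using assms by (simp add: l2_def)
  then obtain n0 where n0: "\<forall>n\<ge>n0. norm (\<Sum>i. (x (i + n))\<^sup>2) < e\<^sup>2"
    using suminf_exist_split[of "e\<^sup>2" "\<lambda>i. (x i)\<^sup>2"] assms(2) by auto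
  have "l2norm (\<lambda>i. x (i + n)) < e" if "n \<ge> n0" for n
  proof -
    have "(\<Sum>i. (x (i + n))\<^sup>2) < e\<^sup>2" using n0 that by auto
    then have "l2norm (\<lambda>i. x (i + n)) < sqrt (e\<^sup>2)"
      unfolding l2norm_def by (rule real_sqrt_less_mono)
    then show ?thesis using assms(2) by simp
  qed
  then show ?thesis by blast
qed

definition l2_ball :: "(nat \<Rightarrow> real) \<Rightarrow> real \<Rightarrow> (nat \<Rightarrow> real) set" where
  "l2_ball y e = {w \<in> l2. l2dist y w < e}"

lemma l2_ball_mono: "e \<le> e' \<Longrightarrow> l2_ball y e \<subseteq> l2_ball y e'"
  by (auto simp: l2_ball_def)

lemma l2_ball_subset:
  assumes "x \<in> l2" "y \<in> l2" "l2dist x y + e \<le> e'"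
  shows "l2_ball y e \<subseteq> l2_ball x e'"
proof
  fix w assume "w \<in> l2_ball y e"
  then have "w \<in> l2" "l2dist y w < e" by (auto simp: l2_ball_def)
  then show "w \<in> l2_ball x e'"
    using l2dist_triangle[OF assms(1,2) \<open>w \<in> l2\<close>] assms(3) by (simp add: l2_ball_def)
qed

lemma l2_closure_subset_ball:
  assumes "y \<in> l2" "A \<subseteq> l2_ball y e" "e < e'"
  shows "l2_closure A \<subseteq> l2_ball y e'"
proof
  fix w assume "w \<in> l2_closure A"
  then have "w \<in> l2" and "\<forall>d>0. \<exists>x\<in>A. l2dist w x < d"
    by (auto simp: l2_closure_def)
  moreover from this(2) obtain x where "x \<in> A" "l2dist w x < e' - e"
    using assms(3) by (meson diff_gt_0_iff_gt)
  moreover from \<open>x \<in> A\<close> have "x \<in> l2" "l2dist y x < e"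
    using assms(2) by (auto simp: l2_ball_def)
  ultimately show "w \<in> l2_ball y e'"
    using l2dist_triangle[OF assms(1) \<open>x \<in> l2\<close> \<open>w \<in> l2\<close>] l2dist_commute[of w x]
    by (simp add: l2_ball_def)
qed

definition centre :: "rat list \<Rightarrow> nat \<Rightarrow> real" where
  "centre r i = (if i < length r then of_rat (r ! i) else 0)"

lemma centre_in_l2: "centre r \<in> l2"
  unfolding l2_def mem_Collect_eq by (rule summable_finite[of "{..<length r}"]) (auto simp: centre_def)

lemma l2_ball_centre_subset_U:
  assumes "0 < \<delta>"
  shows "l2_ball (centre r) (of_rat \<delta> / sqrt (real (length r) + 1)) \<subseteq> U r \<delta>"
proof
  fix w assume "w \<in> l2_ball (centre r) (of_rat \<delta> / sqrt (real (length r) + 1))"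
  define d where "d i = centre r i - w i" for i
  have w: "w \<in> l2" and d_small: "l2norm d < of_rat \<delta> / sqrt (real (length r) + 1)"
    using \<open>w \<in> _\<close> by (auto simp: l2_ball_def l2dist_def d_def[abs_def])
  have "d \<in> l2" unfolding d_def[abs_def] using centre_in_l2 w by (rule l2_diff)
  have "of_rat \<delta> / sqrt (real (length r) + 1) \<le> of_rat \<delta> / 1"
    using assms by (intro divide_left_mono) auto
  then have d_lt_\<delta>: "l2norm d < of_rat \<delta>" using d_small by simp
  have coord: "\<bar>w i - of_rat (r ! i)\<bar> < of_rat \<delta> / sqrt (real (length r))" if "i < length r" for i
  proof -
    have "\<bar>w i - of_rat (r ! i)\<bar> = \<bar>d i\<bar>" using that by (simp add: d_def centre_def)
    also have "\<dots> \<le> l2norm d" using \<open>d \<in> l2\<close> by (rule abs_le_l2norm)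
    also have "\<dots> < of_rat \<delta> / sqrt (real (length r) + 1)" by (fact d_small)
    also have "\<dots> \<le> of_rat \<delta> / sqrt (real (length r))"
      using assms that by (intro divide_left_mono mult_pos_pos) auto
    finally show ?thesis .
  qed
  have "l2norm (\<lambda>i. w (i + length r)) \<le> 1 * l2norm d"
    by (rule l2_shift_scaled(2)[OF \<open>d \<in> l2\<close>, of 1 _ "length r"]) (auto simp: d_def centre_def)
  then have tail: "l2norm (\<lambda>i. w (i + length r)) < of_rat \<delta>" using d_lt_\<delta> by simp
  show "w \<in> U r \<delta>" using w coord tail by (auto simp: U_def)
qed

lemma L2_set_le_l2dist_centre:
  assumes "y \<in> l2" "length r \<le> a"
  shows "L2_set y {a..<n} \<le> l2dist (centre r) y"
proof -
  have "L2_set y {a..<n} = L2_set (\<lambda>i. centre r i - y i) {a..<n}"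
    unfolding L2_set_def using assms(2) by (intro arg_cong[where f = sqrt] sum.cong) (auto simp: centre_def)
  also have "\<dots> \<le> l2dist (centre r) y"
    unfolding l2dist_def using centre_in_l2 assms(1) by (intro L2_set_le_l2norm l2_diff) auto
  finally show ?thesis .
qed

lemma rat_list_approx:
  fixes y :: "nat \<Rightarrow> real"
  assumes "0 < \<theta>"
  shows "\<exists>s :: rat list. length s = n \<and> (\<forall>m<n. \<bar>of_rat (s ! m) - y m\<bar> < \<theta>)"
proof -
  have "\<exists>q :: rat. \<bar>of_rat q - y m\<bar> < \<theta>" for m
    using of_rat_dense[of "y m - \<theta>" "y m + \<theta>"] assms by (auto simp: abs_diff_less_iff)
  then obtain f where "\<And>m. \<bar>of_rat (f m) - y m\<bar> < (\<theta> :: real)" by metis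
  then show ?thesis by (intro exI[of _ "map f [0..<n]"]) simp
qed

lemma U_approx:
  assumes "length s = n" "0 < n"
    and approx: "\<And>m. m < n \<Longrightarrow> \<bar>of_rat (s ! m) - y m\<bar> < of_rat \<eta> / sqrt n"
    and "x \<in> U s \<eta>"
  shows "x \<in> l2" and "L2_set (\<lambda>i. x i - y i) {..<n} < 2 * of_rat \<eta>"
    and "l2norm (\<lambda>i. x (i + n)) < of_rat \<eta>"
proof -
  have "s \<noteq> []" using assms(1,2) by auto
  then have close: "\<And>m. m < n \<Longrightarrow> \<bar>x m - of_rat (s ! m)\<bar> < of_rat \<eta> / sqrt n"
    using assms(1,4) by (auto simp: U_def)
  show "x \<in> l2" and "l2norm (\<lambda>i. x (i + n)) < of_rat \<eta>"
    using assms(1,4) \<open>s \<noteq> []\<close> by (auto simp: U_def)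
  have "0 < of_rat \<eta> / sqrt n" using approx[OF \<open>0 < n\<close>] by linarith
  then have "0 < (of_rat \<eta> :: real)" using \<open>0 < n\<close> by (simp add: zero_less_divide_iff)
  have "L2_set (\<lambda>i. \<bar>x i - y i\<bar>) {..<n} < L2_set (\<lambda>_. 2 * of_rat \<eta> / sqrt n) {..<n}"
  proof (rule L2_set_strict_mono)
    fix m assume "m \<in> {..<n}"
    then show "\<bar>x m - y m\<bar> < 2 * of_rat \<eta> / sqrt n"
      using close[of m] approx[of m] by simp
  qed (use \<open>0 < n\<close> in auto)
  also have "\<dots> = 2 * of_rat \<eta>"
    using \<open>0 < n\<close> \<open>0 < of_rat \<eta>\<close> by (simp add: L2_set_constant)
  finally show "L2_set (\<lambda>i. x i - y i) {..<n} < 2 * of_rat \<eta>" by (simp add: L2_set_abs)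
qed

lemma U_subset_l2_ball:
  assumes "length s = n" "0 < n"
    and approx: "\<And>m. m < n \<Longrightarrow> \<bar>of_rat (s ! m) - y m\<bar> < of_rat \<eta> / sqrt n"
    and "y \<in> l2"
  shows "U s \<eta> \<subseteq> l2_ball y (3 * of_rat \<eta> + l2norm (\<lambda>i. y (i + n)))"
proof
  fix x assume "x \<in> U s \<eta>"
  note x = U_approx[OF assms(1-3) this]
  have "l2dist y x \<le> L2_set (\<lambda>i. y i - x i) {..<n} + l2norm (\<lambda>i. y (i + n) - x (i + n))"
    unfolding l2dist_def using assms(4) x(1) by (intro l2norm_le_head_tail l2_diff)
  moreover have "L2_set (\<lambda>i. y i - x i) {..<n} = L2_set (\<lambda>i. x i - y i) {..<n}"
    by (simp add: L2_set_def power2_commute)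
  moreover have "l2norm (\<lambda>i. y (i + n) - x (i + n)) \<le> l2norm (\<lambda>i. y (i + n)) + l2norm (\<lambda>i. x (i + n))"
    using l2_dominated(2)[OF l2_shift[OF assms(4)] l2_shift[OF x(1)],
        of "\<lambda>i. y (i + n) - x (i + n)"] by simp
  ultimately show "x \<in> l2_ball y (3 * of_rat \<eta> + l2norm (\<lambda>i. y (i + n)))"
    using x by (simp add: l2_ball_def)
qed

lemma Bw_pow_apply: "(Bw w ^^ k) x i = (\<Prod>j<k. real (w (i + j))) * x (i + k)"
proof (induction k arbitrary: x)
  case 0
  then show ?case by simp
next
  case (Suc k)
  have "(Bw w ^^ Suc k) x i = (Bw w ^^ k) (Bw w x) i"
    by (simp only: funpow_Suc_right o_apply)
  also have "\<dots> = (\<Prod>j<Suc k. real (w (i + j))) * x (i + Suc k)"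
    by (simp add: Suc.IH Bw_def mult.assoc)
  finally show ?case .
qed

lemma prod_weights_le:
  fixes w :: "nat \<Rightarrow> nat"
  assumes "\<And>m. w m \<le> 2"
  shows "(\<And>m. a \<le> m \<Longrightarrow> m < i + k \<Longrightarrow> w m = 1) \<Longrightarrow> (\<Prod>j<k. real (w (i + j))) \<le> 2 ^ min k a"
proof (induction k)
  case 0
  then show ?case by simp
next
  case (Suc k)
  have IH: "(\<Prod>j<k. real (w (i + j))) \<le> 2 ^ min k a"
    using Suc by simp
  have "0 \<le> (\<Prod>j<k. real (w (i + j)))" by (simp add: prod_nonneg)
  show ?case
  proof (cases "k < a")
    case True
    have "(\<Prod>j<Suc k. real (w (i + j))) \<le> 2 ^ min k a * 2"
      using IH assms[of "i + k"] \<open>0 \<le> _\<close> by (simp add: mult_mono)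
    then show ?thesis using True by (simp add: min_def)
  next
    case False
    then have "w (i + k) = 1" using Suc.prems by simp
    then show ?thesis using IH False by (simp add: min_absorb2)
  qed
qed

lemma l2norm_Bw_pow_le:
  fixes w :: "nat \<Rightarrow> nat"
  assumes x: "x \<in> l2" and w: "\<And>m. w m \<le> 2" "\<And>m. a \<le> m \<Longrightarrow> m < n \<Longrightarrow> w m = 1"
    and k: "a \<le> k" "k \<le> n"
  shows "l2norm ((Bw w ^^ k) x) \<le> 2 ^ a * L2_set x {a..<n} + 2 ^ k * l2norm (\<lambda>i. x (i + n))"
proof -
  obtain m where n_eq: "n = m + k" using k(2) by (metis le_add_diff_inverse2)
  define W where "W i = (\<Prod>j<k. real (w (i + j)))" for i
  have Bx: "(Bw w ^^ k) x = (\<lambda>i. W i * x (i + k))"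
    by (simp add: fun_eq_iff Bw_pow_apply W_def)
  have W_nonneg: "0 \<le> W i" for i
    by (simp add: W_def prod_nonneg)
  have W_le: "W i \<le> 2 ^ k" for i
    unfolding W_def using prod_mono[of "{..<k}" "\<lambda>j. real (w (i + j))" "\<lambda>_. 2"] w(1)
    by (simp add: of_nat_le_iff[of _ 2, symmetric])
  have W_head: "W i \<le> 2 ^ a" if "i < m" for i
  proof -
    have "W i \<le> 2 ^ min k a"
      unfolding W_def using that n_eq by (intro prod_weights_le w) auto
    also have "\<dots> \<le> 2 ^ a" by (intro power_increasing) auto
    finally show ?thesis .
  qed
  have Bx_l2: "(\<lambda>i. W i * x (i + k)) \<in> l2"
    using W_le W_nonneg by (intro l2_shift_scaled(1)[OF x, of "2 ^ k" _ k]) (auto simp: abs_mult mult_right_mono)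
  have "l2norm ((Bw w ^^ k) x)
      \<le> L2_set (\<lambda>i. W i * x (i + k)) {..<m} + l2norm (\<lambda>i. W (i + m) * x (i + n))"
    using l2norm_le_head_tail[OF Bx_l2, of m] by (simp add: Bx n_eq add.assoc)
  moreover have "L2_set (\<lambda>i. W i * x (i + k)) {..<m} \<le> 2 ^ a * L2_set x {a..<n}"
  proof -
    have "L2_set (\<lambda>i. W i * x (i + k)) {..<m} \<le> L2_set (\<lambda>i. 2 ^ a * x (i + k)) {..<m}"
      using W_head W_nonneg by (intro L2_set_mono_abs) (auto simp: abs_mult mult_right_mono)
    also have "\<dots> = 2 ^ a * L2_set x {k..<n}"
      using L2_set_right_distrib[of "2 ^ a" "\<lambda>i. x (i + k)" "{..<m}"] by (simp add: L2_set_shift n_eq)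
    also have "\<dots> \<le> 2 ^ a * L2_set x {a..<n}"
      using k(1) by (intro mult_left_mono L2_set_subset_mono) auto
    finally show ?thesis .
  qed
  moreover have "l2norm (\<lambda>i. W (i + m) * x (i + n)) \<le> 2 ^ k * l2norm (\<lambda>i. x (i + n))"
    using W_le W_nonneg
    by (intro l2_shift_scaled(2)[OF l2_shift[OF x], of "2 ^ k" _ 0]) (auto simp: abs_mult mult_right_mono)
  ultimately show ?thesis by linarith
qed

lemma l2norm_Bw_pow_U_lt_1:
  fixes w :: "nat \<Rightarrow> nat"
  assumes s: "length s = n" "0 < n" "\<And>m. m < n \<Longrightarrow> \<bar>of_rat (s ! m) - y m\<bar> < of_rat \<eta> / sqrt n"
    and x: "x \<in> U s \<eta>"
    and y_small: "L2_set y {a..<n} < 1 / (4 * 2 ^ a)"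
    and \<eta>_small: "(of_rat \<eta> :: real) < 1 / (8 * 2 ^ a)" "(of_rat \<eta> :: real) < 1 / 2 ^ n"
    and w: "\<And>m. w m \<le> 2" "\<And>m. a \<le> m \<Longrightarrow> m < n \<Longrightarrow> w m = 1"
    and k: "a \<le> k" "k < n"
  shows "l2norm ((Bw w ^^ k) x) < 1"
proof -
  note x_approx = U_approx[OF s x]
  have "L2_set x {a..<n} \<le> L2_set (\<lambda>i. x i - y i) {a..<n} + L2_set y {a..<n}"
    using L2_set_triangle_ineq[of "\<lambda>i. x i - y i" y "{a..<n}"] by simp
  also have "L2_set (\<lambda>i. x i - y i) {a..<n} \<le> L2_set (\<lambda>i. x i - y i) {..<n}"
    by (rule L2_set_subset_mono) auto
  finally have "L2_set x {a..<n} < 2 * of_rat \<eta> + 1 / (4 * 2 ^ a)"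
    using x_approx(2) y_small by linarith
  then have head: "2 ^ a * L2_set x {a..<n} < 1 / 2"
    using \<eta>_small(1) by (simp add: field_simps)
  have "0 < (of_rat \<eta> :: real)"
    using x_approx(2) L2_set_nonneg[of "\<lambda>i. x i - y i" "{..<n}"] by linarith
  moreover have "2 * 2 ^ k \<le> (2 :: real) ^ n"
    using power_increasing[of "Suc k" n "2 :: real"] k(2) by simp
  ultimately have "of_rat \<eta> * (2 * 2 ^ k) \<le> (of_rat \<eta> :: real) * 2 ^ n"
    by (intro mult_left_mono) auto
  then have "2 ^ k * of_rat \<eta> < (1 / 2 :: real)"
    using \<eta>_small(2) by (simp add: field_simps)
  moreover have "2 ^ k * l2norm (\<lambda>i. x (i + n)) < 2 ^ k * of_rat \<eta>"
    using x_approx(3) by (intro mult_strict_left_mono) auto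
  ultimately have tail: "2 ^ k * l2norm (\<lambda>i. x (i + n)) < 1 / 2" by linarith
  show ?thesis
    using l2norm_Bw_pow_le[of x w a n k, OF x_approx(1) w k(1) less_imp_le[OF k(2)]] head tail by linarith
qed

lemma plus_seq_append_ones:
  assumes "set \<alpha> \<subseteq> {1, 2}"
  shows "plus_seq (\<alpha> @ replicate k 1) m \<le> 2"
    and "length \<alpha> \<le> m \<Longrightarrow> m < length \<alpha> + k \<Longrightarrow> plus_seq (\<alpha> @ replicate k 1) m = 1"
proof -
  show "plus_seq (\<alpha> @ replicate k 1) m \<le> 2"
  proof (cases "m < length \<alpha>")
    case True
    then have "\<alpha> ! m \<in> {1, 2}" using assms nth_mem by blast
    then show ?thesis using True by (auto simp: plus_seq_def nth_append)
  qed (auto simp: plus_seq_def nth_append)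
  show "length \<alpha> \<le> m \<Longrightarrow> m < length \<alpha> + k \<Longrightarrow> plus_seq (\<alpha> @ replicate k 1) m = 1"
    by (simp add: plus_seq_def nth_append)
qed

lemma condition_refinement:
  assumes cond: "is_condition \<alpha> r \<delta>"
    and y: "y \<in> l2" "l2dist (centre r) y < 1 / (4 * 2 ^ length \<alpha>)"
    and ball: "l2_ball y \<epsilon> \<subseteq> U r \<delta>"
    and n: "length \<alpha> \<le> n" "0 < n" "l2norm (\<lambda>i. y (i + n)) < \<epsilon> / 4"
  shows "\<exists>\<beta> s \<eta>. is_condition \<beta> s \<eta> \<and> cond_less \<beta> s \<eta> \<alpha> r \<delta> \<and>
           U s \<eta> \<subseteq> l2_ball y \<epsilon> \<and> length \<beta> = n"
proof -
  define a where "a = length \<alpha>"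
  have \<alpha>: "set \<alpha> \<subseteq> {1, 2}" "length r \<le> a"
    using cond by (auto simp: is_condition_def a_def)
  have "0 < \<epsilon>" using n(3) l2norm_nonneg[OF l2_shift[OF y(1), of n]] by linarith
  \<comment> \<open>The three bounds on \<eta> serve the tail part of the shifts, their head part, and the
    radius of the ball around y containing U s \<eta>.\<close>
  obtain \<eta> :: rat where \<eta>: "0 < \<eta>" "of_rat \<eta> < min (min (1 / 2 ^ n) (1 / (8 * 2 ^ a))) (\<epsilon> / 12)"
    using of_rat_dense[of 0 "min (min (1 / 2 ^ n) (1 / (8 * 2 ^ a))) (\<epsilon> / 12)"] \<open>0 < \<epsilon>\<close> by auto
  obtain s where s: "length s = n" "\<And>m. m < n \<Longrightarrow> \<bar>of_rat (s ! m) - y m\<bar> < of_rat \<eta> / sqrt n"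
    using rat_list_approx[of "of_rat \<eta> / sqrt n" n y] \<eta>(1) n(2) by auto
  define \<beta> where "\<beta> = \<alpha> @ replicate (n - a) 1"
  have "length \<beta> = n" using n(1) by (simp add: \<beta>_def a_def)
  have U_ball: "U s \<eta> \<subseteq> l2_ball y (\<epsilon> / 2)"
    using U_subset_l2_ball[OF s(1) n(2) s(2) y(1)] \<eta>(2) n(3) by (force simp: l2_ball_def)
  have "l2_closure (U s \<eta>) \<subseteq> U r \<delta>"
    using l2_closure_subset_ball[OF y(1) U_ball, of \<epsilon>] ball \<open>0 < \<epsilon>\<close> by auto
  moreover have "l2norm ((Bw (plus_seq \<beta>) ^^ k) x) < 1" if "a \<le> k" "k < n" "x \<in> U s \<eta>" for k x
  proof (rule l2norm_Bw_pow_U_lt_1[OF s(1) n(2) s(2) that(3)])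
    show "L2_set y {a..<n} < 1 / (4 * 2 ^ a)"
      using L2_set_le_l2dist_centre[OF y(1) \<alpha>(2), of n] y(2) unfolding a_def by linarith
  qed (use \<eta>(2) plus_seq_append_ones[OF \<alpha>(1)] n(1) that in \<open>auto simp: \<beta>_def a_def\<close>)
  ultimately have less: "cond_less \<beta> s \<eta> \<alpha> r \<delta>"
    unfolding cond_less_def by (auto simp: \<beta>_def a_def)
  have \<eta>_n: "\<eta> < 1 / 2 ^ n"
    using \<eta>(2) of_rat_less[of \<eta> "1 / 2 ^ n", where 'a = real]
    by (simp add: of_rat_divide of_rat_power)
  then have "\<eta> < 1" using order_less_le_trans[of \<eta> "1 / 2 ^ n" 1] by simp
  then have "is_condition \<beta> s \<eta>"
    using \<eta>_n \<alpha>(1) \<eta>(1) s(1) \<open>length \<beta> = n\<close> by (auto simp: is_condition_def \<beta>_def)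
  moreover have "U s \<eta> \<subseteq> l2_ball y \<epsilon>"
    using U_ball l2_ball_mono[of "\<epsilon> / 2" \<epsilon> y] \<open>0 < \<epsilon>\<close> by auto
  ultimately show ?thesis using less \<open>length \<beta> = n\<close> by blast
qed

lemma dense_open_ball_in_U:
  assumes "0 < \<delta>" "D \<subseteq> l2" "l2_open D" "l2_dense D" "0 < c"
  shows "\<exists>y \<epsilon>. y \<in> l2 \<and> l2dist (centre r) y < c \<and> 0 < \<epsilon> \<and> l2_ball y \<epsilon> \<subseteq> D \<inter> U r \<delta>"
proof -
  define \<rho> where "\<rho> = of_rat \<delta> / sqrt (real (length r) + 1)"
  have "0 < \<rho>" using assms(1) by (simp add: \<rho>_def)
  then obtain y where "y \<in> D" "l2dist (centre r) y < \<rho> / 2" "l2dist (centre r) y < c"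
    using assms(4,5) centre_in_l2 unfolding l2_dense_def by (metis half_gt_zero min_less_iff_conj)
  have "y \<in> l2" using \<open>y \<in> D\<close> assms(2) by blast
  obtain \<epsilon> where "0 < \<epsilon>" "\<epsilon> \<le> \<rho> / 2" "l2_ball y \<epsilon> \<subseteq> D"
    using assms(3) \<open>y \<in> D\<close> \<open>0 < \<rho>\<close> unfolding l2_open_def l2_ball_def
    by (metis (no_types, lifting) half_gt_zero min.cobounded2 min_less_iff_conj mem_Collect_eq subsetI)
  moreover have "l2_ball y \<epsilon> \<subseteq> U r \<delta>"
    using l2_ball_subset[OF centre_in_l2[of r] \<open>y \<in> l2\<close>, of \<epsilon> \<rho>] \<open>\<epsilon> \<le> \<rho> / 2\<close>
      \<open>l2dist (centre r) y < \<rho> / 2\<close> l2_ball_centre_subset_U[OF assms(1), of r] by (force simp: \<rho>_def)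
  ultimately show ?thesis using \<open>y \<in> l2\<close> \<open>l2dist (centre r) y < c\<close> by blast
qed

theorem lemma10:
  fixes \<alpha> :: "nat list" and r :: "rat list" and \<delta> :: rat
    and D :: "(nat \<Rightarrow> real) set" and N :: nat
  assumes "is_condition \<alpha> r \<delta>"
    and "D \<subseteq> l2" and "l2_open D" and "l2_dense D"
  shows "\<exists>\<beta> s \<eta>. is_condition \<beta> s \<eta> \<and> cond_less \<beta> s \<eta> \<alpha> r \<delta> \<and>
           U s \<eta> \<subseteq> D \<and> length \<beta> > N"
proof -
  have "0 < \<delta>" using assms(1) by (simp add: is_condition_def)
  then obtain y \<epsilon> where y: "y \<in> l2" "l2dist (centre r) y < 1 / (4 * 2 ^ length \<alpha>)"
    and "0 < \<epsilon>" and ball: "l2_ball y \<epsilon> \<subseteq> D \<inter> U r \<delta>"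
    using dense_open_ball_in_U[OF _ assms(2-4), of \<delta> "1 / (4 * 2 ^ length \<alpha>)" r] by auto
  obtain n0 where n0: "\<forall>n\<ge>n0. l2norm (\<lambda>i. y (i + n)) < \<epsilon> / 4"
    using l2norm_tail_small[OF y(1), of "\<epsilon> / 4"] \<open>0 < \<epsilon>\<close> by auto
  define n where "n = max n0 (max (length \<alpha>) (Suc N))"
  have n: "length \<alpha> \<le> n" "0 < n" "l2norm (\<lambda>i. y (i + n)) < \<epsilon> / 4"
    using n0 by (auto simp: n_def)
  obtain \<beta> s \<eta> where "is_condition \<beta> s \<eta>" "cond_less \<beta> s \<eta> \<alpha> r \<delta>"
      "U s \<eta> \<subseteq> l2_ball y \<epsilon>" "length \<beta> = n"
    using condition_refinement[OF assms(1) y _ n] ball by blast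
  moreover have "N < n" by (simp add: n_def)
  ultimately show ?thesis using ball by blast
qed

end
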